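(* For any $j \neq 1$ and any unit vector $s \in \mathbb{S}^{d-1}$, with $\Delta_w = w_1 - w_1^*$, $v = X-\mu_j^*$ and $\beta = (R_{j1}^* )^2/(64(\sigma_1^* \vee \sigma_j^* )^2)$, $$\mathbb{E}_{X\sim\mathcal{D}_j} [\Delta_w] \le \left( 3 (\pi_1^*/\pi_j^* ) + 5 \right) \exp \left(-\beta \right),\qquad |\mathbb{E}_{X\sim\mathcal{D}_j} [\Delta_w \langle v,s\rangle]| \le \left(3 (\pi_1^* / \pi_j^* ) \sigma_j^* + 5R_{j1}^* \right) \exp \left (-\beta \right).$$
   Context: $\mathcal{G}^*$ is a mixture with density $\sum_{l=1}^k \pi_l^* \mathcal{N}(\mu_l^*, (\sigma_l^* )^2 I_d)$ satisfying, for a universal constant $C\ge 64$, $\|\mu_i^* - \mu_l^*\| \ge C (\sigma_i^* \vee \sigma_l^* ) \sqrt{\log k + \log(\rho_\sigma \rho_\pi)}$ for all $i\ne l$, where $\rho_\pi = \max_i \pi_i^*/\min_i \pi_i^*$, $\rho_\sigma = \max_i \sigma_i^*/\min_i \sigma_i^*$. $\mathcal{D}_j = \mathcal{N}(\mu_j^*, (\sigma_j^* )^2 I_d)$ is the $j$-th component. Current estimates $\{(\pi_i,\mu_i,\sigma_i)\}$ satisfy for all $i$: $\|\mu_i - \mu_i^*\| \le \frac{\sigma_i^*}{16}\min_{l\ne i}\frac{\|\mu_i^*-\mu_l^*\|}{\sigma_i^*\vee\sigma_l^*}$, $|\pi_i-\pi_i^*|\le \pi_i^*/2$, $|\sigma_i^2-(\sigma_i^*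 )^2|\le 0.5(\sigma_i^* )^2/\sqrt d$. $R_{j1}^* = \|\mu_j^*-\mu_1^*\|$. The E-step weight is $w_1(X) = \frac{\pi_1 \exp(-\|X - \mu_1\|^2/(2 \sigma_1^2) - d \log (\sigma_1^2) / 2)}{\sum_{l=1}^k \pi_l \exp(-\|X - \mu_l\|^2/(2 \sigma_l^2) - d \log (\sigma_l^2) / 2)}$, and $w_1^*$ is the same expression with the true parameters in place of the estimates. *)

theory Defs
  imports "HOL-Analysis.Analysis"
begin

definition gauss_density :: "real ^ 'd \<Rightarrow> real \<Rightarrow> real ^ 'd \<Rightarrow> real" where
  "gauss_density mu sg x =
     (2 * pi * sg\<^sup>2) powr (- real CARD('d) / 2) * exp (- (norm (x - mu))\<^sup>2 / (2 * sg\<^sup>2))"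

definition gauss_expect :: "real ^ 'd \<Rightarrow> real \<Rightarrow> (real ^ 'd \<Rightarrow> real) \<Rightarrow> real" where
  "gauss_expect mu sg f = (\<integral>x. gauss_density mu sg x * f x \<partial>lborel)"

definition comp_term :: "(nat \<Rightarrow> real) \<Rightarrow> (nat \<Rightarrow> real ^ 'd) \<Rightarrow> (nat \<Rightarrow> real) \<Rightarrow> nat \<Rightarrow> real ^ 'd \<Rightarrow> real" where
  "comp_term p m s l x =
     p l * exp (- (norm (x - m l))\<^sup>2 / (2 * (s l)\<^sup>2) - real CARD('d) * ln ((s l)\<^sup>2) / 2)"

definition estep_weight :: "nat \<Rightarrow> (nat \<Rightarrow> real) \<Rightarrow> (nat \<Rightarrow> real ^ 'd) \<Rightarrow> (nat \<Rightarrow> real) \<Rightarrow> nat \<Rightarrow> real ^ 'd \<Rightarrow> real" where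
  "estep_weight k p m s i x = comp_term p m s i x / (\<Sum>l = 1..k. comp_term p m s l x)"

end

theory Submission
  imports Defs "HOL-Probability.Distributions"
begin

(* Write c_l(x) for the unnormalised likelihood term of component l. The E-step weight of
   component 1 is at most c_1/(c_1 + c_j), hence at most (c_1/c_j) powr (1/8), and likewise for
   the true weight. Against the density of D_j, the function (c_1/c_j) powr (1/8) times
   exp (+-<x - mu_j, s>/sigma_j) is the exponential of a concave quadratic in x: the exponent 1/8
   makes the positive term |x - m_j|^2/(16 sg_j^2) too weak to destroy concavity. Its integral is
   at most its maximum times a Gaussian normaliser. The factor 1/sqrt d in the variance assumption
   gives d (sigma_j^2/sg_j^2 - 1)^2 <= 1, which keeps the normaliser below exp (1/7) in every
   dimension, and the separation of mu_1 from mu_j puts the maximum of the exponent below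
   -R^2/(64 M^2) - 3, where M = max sigma_1 sigma_j. Since exp y + exp (-y) dominates both 1 and |y|,
   these tilted integrals bound both the expectation of w_1 - w_1* and its first moment along s. *)

lemma ln_add_one_ge:
  fixes u :: real
  assumes "-1/2 \<le> u" "u \<le> 1"
  shows "u - 2 * u\<^sup>2 \<le> ln (1 + u)"
proof (cases "u \<ge> 0")
  case True
  then show ?thesis
    using ln_one_plus_pos_lower_bound[of u] assms zero_le_power2[of u] by linarith
next
  case False
  then show ?thesis
    using ln_one_minus_pos_lower_bound[of "-u"] assms by simp
qed

lemma ln_tilt_normaliser_le:
  fixes v r :: real
  assumes v: "v > 0" and r: "-1/2 \<le> r - 1" "r - 1 \<le> 1"
  shows "(ln v - ln r) / 16 - ln (1 + v/8 - r/8) / 2 \<le> (r - 1)\<^sup>2 / 7"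
proof -
  define \<delta> where "\<delta> = r - 1"
  define y where "y = 1 - \<delta>/7"
  have y: "y > 0"
    using r by (simp add: y_def \<delta>_def)
  have mean: "1 + v/8 - r/8 = 1/8 * v + 7/8 * y"
    by (simp add: y_def \<delta>_def field_simps)
  have "1/8 * ln v + 7/8 * ln y \<le> ln (1 + v/8 - r/8)"
    unfolding mean using concave_onD[OF ln_concave, of "7/8" v y] v y by simp
  moreover have "- \<delta>/7 - 2 * (\<delta>/7)\<^sup>2 \<le> ln y"
    using ln_add_one_ge[of "- \<delta>/7"] r unfolding \<delta>_def[symmetric] by (simp add: y_def)
  moreover have "\<delta> - 2 * \<delta>\<^sup>2 \<le> ln r"
    using ln_add_one_ge[of \<delta>] r by (simp add: \<delta>_def)
  ultimately show ?thesis
    by (simp add: \<delta>_def power2_eq_square field_simps)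
qed

lemma divide_add_le_powr:
  fixes a b e :: real
  assumes "a > 0" "b > 0" "0 \<le> e" "e \<le> 1"
  shows "a / (a + b) \<le> (a / b) powr e"
proof (cases "a / b \<le> 1")
  case True
  have "a / (a + b) \<le> a / b"
    using assms by (intro divide_left_mono) auto
  also have "\<dots> = (a / b) powr 1"
    using assms by simp
  also have "\<dots> \<le> (a / b) powr e"
    using True assms by (intro powr_mono') auto
  finally show ?thesis .
next
  case False
  then have "a / (a + b) \<le> 1" and "1 \<le> (a / b) powr e"
    using assms by (auto intro: ge_one_powr_ge_zero)
  then show ?thesis
    by linarith
qed

lemma powr_le_one_add:
  fixes x e :: real
  assumes "x \<ge> 0" "0 \<le> e" "e \<le> 1"
  shows "x powr e \<le> 1 + x"
proof (cases "x \<le> 1")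
  case True
  then show ?thesis
    using assms powr_le1[of e x] by simp
next
  case False
  then have "x powr e \<le> x powr 1"
    using assms by (intro powr_mono) auto
  then show ?thesis
    using False by simp
qed

lemma
  fixes y :: real
  shows abs_le_exp_add_exp_minus: "\<bar>y\<bar> \<le> exp y + exp (- y)"
    and one_le_exp_add_exp_minus: "1 \<le> exp y + exp (- y)"
  using exp_ge_add_one_self[of y] exp_ge_add_one_self[of "- y"] exp_gt_zero[of y] exp_gt_zero[of "- y"]
  by linarith+

lemma has_bochner_integral_exp_neg_sq:
  fixes A z :: real
  assumes "A > 0"
  shows "has_bochner_integral lborel (\<lambda>u. exp (- A * (u - z)\<^sup>2)) (sqrt (pi / A))"
proof -
  define \<sigma> where "\<sigma> = sqrt (1 / (2 * A))"
  have \<sigma>: "\<sigma> > 0" "\<sigma>\<^sup>2 = 1 / (2 * A)"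
    using assms by (auto simp: \<sigma>_def)
  have "exp (- A * (u - z)\<^sup>2) = sqrt (2 * pi * \<sigma>\<^sup>2) * normal_density z \<sigma> u" for u
    using assms \<sigma> by (simp add: normal_density_def field_simps)
  moreover have "has_bochner_integral lborel (\<lambda>u. sqrt (2 * pi * \<sigma>\<^sup>2) * normal_density z \<sigma> u)
      (sqrt (2 * pi * \<sigma>\<^sup>2) * 1)"
    using integrable_normal_density[OF \<sigma>(1)] integral_normal_density[OF \<sigma>(1)]
    by (intro has_bochner_integral_mult_right) (simp add: has_bochner_integral_iff)
  moreover have "sqrt (2 * pi * \<sigma>\<^sup>2) = sqrt (pi / A)"
    using \<sigma> by simp
  ultimately show ?thesis
    by simp
qed

lemma has_bochner_integral_exp_neg_sq_norm:
  fixes z :: "'a::euclidean_space"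
  assumes A: "A > 0"
  shows "has_bochner_integral lborel (\<lambda>x. exp (- A * (norm (x - z))\<^sup>2)) (sqrt (pi / A) ^ DIM('a))"
proof -
  interpret product_sigma_finite "\<lambda>b::'a. lborel :: real measure"
    by standard
  let ?g = "\<lambda>f. \<Sum>b\<in>Basis. f b *\<^sub>R (b::'a)"
  let ?G = "\<lambda>b u. exp (- (A * (u - z \<bullet> b)\<^sup>2))"
  have sq_norm: "(norm (?g f - z))\<^sup>2 = (\<Sum>b\<in>Basis. (f b - z \<bullet> b)\<^sup>2)" for f
  proof -
    have "(norm (?g f - z))\<^sup>2 = (\<Sum>b\<in>Basis. ((?g f - z) \<bullet> b)\<^sup>2)"
      by (subst power2_norm_eq_inner, subst euclidean_inner) (simp add: power2_eq_square)
    also have "\<dots> = (\<Sum>b\<in>Basis. (f b - z \<bullet> b)\<^sup>2)"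
      by (intro sum.cong refl) (simp add: inner_diff_left inner_sum_left inner_Basis if_distrib cong: if_cong)
    finally show ?thesis .
  qed
  have factor: "exp (- (A * (norm (?g f - z))\<^sup>2)) = (\<Prod>b\<in>Basis. ?G b (f b))" for f
    by (simp add: sq_norm sum_distrib_left exp_sum flip: sum_negf)
  have int: "integrable lborel (?G b)" and val: "integral\<^sup>L lborel (?G b) = sqrt (pi / A)" for b
    using has_bochner_integral_exp_neg_sq[OF A, of "z \<bullet> b"] by (auto simp: has_bochner_integral_iff)
  have "integrable (\<Pi>\<^sub>M b\<in>Basis. lborel) (\<lambda>f. \<Prod>b\<in>Basis. ?G b (f b))"
    by (rule product_integrable_prod) (auto intro: int)
  moreover have "(\<integral>f. (\<Prod>b\<in>Basis. ?G b (f b)) \<partial>(\<Pi>\<^sub>M b\<in>Basis. lborel)) = sqrt (pi / A) ^ DIM('a)"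
    by (subst product_integral_prod) (auto simp: int val)
  moreover have "?g \<in> measurable (\<Pi>\<^sub>M b\<in>Basis. lborel) borel"
    by measurable
  ultimately show ?thesis
    unfolding has_bochner_integral_iff
    by (subst (1 2) lborel_eq) (simp add: integrable_distr_eq integral_distr factor)
qed

lemma power2_norm_diff:
  fixes x y :: "'a::real_inner"
  shows "(norm (x - y))\<^sup>2 = (norm x)\<^sup>2 - 2 * inner y x + (norm y)\<^sup>2"
  by (simp add: power2_norm_eq_inner inner_diff_left inner_diff_right inner_commute)

lemma
  fixes Q :: "'a::euclidean_space \<Rightarrow> real"
  assumes A: "A > 0" and Q: "\<And>x. Q x = - A * (norm x)\<^sup>2 + inner B x + c" and le: "\<And>x. Q x \<le> b"
  shows integrable_exp_quadratic: "integrable lborel (\<lambda>x. exp (Q x))"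
    and integral_exp_quadratic_le: "(\<integral>x. exp (Q x) \<partial>lborel) \<le> exp b * sqrt (pi / A) ^ DIM('a)"
proof -
  define x0 where "x0 = (1 / (2 * A)) *\<^sub>R B"
  have B: "B = (2 * A) *\<^sub>R x0"
    using A by (simp add: x0_def)
  define q0 where "q0 = Q x0"
  have complete_square: "Q x = q0 - A * (norm (x - x0))\<^sup>2" for x
    unfolding q0_def Q B power2_norm_diff by (simp add: power2_norm_eq_inner algebra_simps)
  have "(\<lambda>x. exp (Q x)) = (\<lambda>x. exp q0 * exp (- A * (norm (x - x0))\<^sup>2))"
    unfolding complete_square by (simp add: fun_eq_iff exp_diff exp_minus divide_inverse)
  then have "has_bochner_integral lborel (\<lambda>x. exp (Q x)) (exp q0 * sqrt (pi / A) ^ DIM('a))"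
    using has_bochner_integral_mult_right[OF has_bochner_integral_exp_neg_sq_norm[OF A, of x0]]
    by simp
  moreover have "exp q0 * sqrt (pi / A) ^ DIM('a) \<le> exp b * sqrt (pi / A) ^ DIM('a)"
    using le[of x0] A unfolding q0_def by (intro mult_right_mono) auto
  ultimately show "integrable lborel (\<lambda>x. exp (Q x))"
    and "(\<integral>x. exp (Q x) \<partial>lborel) \<le> exp b * sqrt (pi / A) ^ DIM('a)"
    by (auto simp: has_bochner_integral_iff)
qed

lemma sq_le_sq_add_max_sq:
  fixes D t :: real
  assumes "0 \<le> D"
  shows "D\<^sup>2 / 32 \<le> t\<^sup>2 / 8 + (max 0 (D - t))\<^sup>2 / 24"
proof (cases "t \<le> D")
  case True
  then show ?thesis
    using sum_power2_ge_zero[of 0 "4 * t - D"] by (simp add: power2_eq_square field_simps)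
next
  case False
  then have "D\<^sup>2 \<le> t\<^sup>2"
    using assms by (intro power_mono) auto
  then show ?thesis
    using zero_le_power2[of D] zero_le_power2[of "max 0 (D - t)"] by linarith
qed

lemma tilted_exponent_le_real:
  fixes t u w c i \<tau> M R v1 vj :: real
  assumes \<tau>: "0 < \<tau>" "\<tau> \<le> M" and R: "2000 * M\<^sup>2 \<le> R\<^sup>2" "0 \<le> R"
    and v: "0 < v1" "v1 \<le> 3/2 * M\<^sup>2" "\<tau>\<^sup>2 / 2 \<le> vj"
    and u: "max 0 (15/16 * R - t) \<le> u"
    and w: "0 \<le> w" "w \<le> t + c" and c: "0 \<le> c" "c \<le> \<tau> * R / (16 * M)" and i: "i \<le> t"
  shows "- t\<^sup>2 / (2 * \<tau>\<^sup>2) - u\<^sup>2 / (16 * v1) + w\<^sup>2 / (16 * vj) + i / \<tau> \<le> - R\<^sup>2 / (64 * M\<^sup>2) - 3"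
proof -
  define D where "D = 15/16 * R"
  define X where "X = (max 0 (D - t))\<^sup>2"
  have M: "0 < M"
    using \<tau> by linarith
  have "w\<^sup>2 / (16 * vj) \<le> (2 * t\<^sup>2 + 2 * c\<^sup>2) / (16 * (\<tau>\<^sup>2 / 2))"
  proof (rule frac_le)
    have "w\<^sup>2 \<le> (t + c)\<^sup>2"
      using w by (intro power_mono) auto
    then show "w\<^sup>2 \<le> 2 * t\<^sup>2 + 2 * c\<^sup>2"
      using zero_le_power2[of "t - c"] by (simp add: power2_diff power2_sum)
  qed (use v \<tau> in auto)
  then have w_bound: "w\<^sup>2 / (16 * vj) \<le> t\<^sup>2 / (4 * \<tau>\<^sup>2) + c\<^sup>2 / (4 * \<tau>\<^sup>2)"
    using \<tau> by (simp add: field_simps)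
  have "c\<^sup>2 \<le> (\<tau> * R / (16 * M))\<^sup>2"
    using c by (intro power_mono) auto
  then have c_bound: "c\<^sup>2 / (4 * \<tau>\<^sup>2) \<le> R\<^sup>2 / (1024 * M\<^sup>2)"
    using \<tau> M by (simp add: field_simps power2_eq_square)
  have "X / (24 * M\<^sup>2) \<le> u\<^sup>2 / (16 * v1)"
  proof (rule frac_le)
    show "X \<le> u\<^sup>2"
      using u unfolding X_def D_def by (intro power_mono) auto
  qed (use v M in auto)
  have "t / \<tau> - t\<^sup>2 / (8 * \<tau>\<^sup>2) \<le> 2"
    using \<tau> sum_power2_ge_zero[of 0 "t / \<tau> - 4"] by (simp add: power2_eq_square field_simps)
  moreover have "t\<^sup>2 / (8 * M\<^sup>2) \<le> t\<^sup>2 / (8 * \<tau>\<^sup>2)"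
    using \<tau> by (intro divide_left_mono mult_left_mono power_mono) auto
  moreover have "D\<^sup>2 / (32 * M\<^sup>2) \<le> t\<^sup>2 / (8 * M\<^sup>2) + X / (24 * M\<^sup>2)"
  proof -
    have "D\<^sup>2 / 32 \<le> t\<^sup>2 / 8 + X / 24"
      unfolding X_def using R by (intro sq_le_sq_add_max_sq) (simp add: D_def)
    then show ?thesis
      using M by (simp add: field_simps)
  qed
  moreover have "R\<^sup>2 / (1024 * M\<^sup>2) - D\<^sup>2 / (32 * M\<^sup>2) + 5 \<le> - R\<^sup>2 / (64 * M\<^sup>2)"
  proof -
    have "2000 \<le> R\<^sup>2 / M\<^sup>2"
      using R M by (simp add: field_simps)
    moreover have "R\<^sup>2 / (1024 * M\<^sup>2) - D\<^sup>2 / (32 * M\<^sup>2) + R\<^sup>2 / (64 * M\<^sup>2) = - 89/8192 * (R\<^sup>2 / M\<^sup>2)"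
      by (simp add: D_def field_simps power2_eq_square)
    ultimately show ?thesis
      by linarith
  qed
  moreover have "i / \<tau> \<le> t / \<tau>"
    using i \<tau> by (simp add: divide_right_mono)
  ultimately show ?thesis
    using w_bound c_bound \<open>X / (24 * M\<^sup>2) \<le> u\<^sup>2 / (16 * v1)\<close> by (simp add: field_simps)
qed

lemma tilted_exponent_le:
  fixes x \<mu> m1 mj s :: "'a::real_inner"
  assumes \<tau>: "0 < \<tau>" "\<tau> \<le> M" and R: "2000 * M\<^sup>2 \<le> R\<^sup>2" "0 \<le> R"
    and v: "0 < v1" "v1 \<le> 3/2 * M\<^sup>2" "\<tau>\<^sup>2 / 2 \<le> vj"
    and m1: "15/16 * R \<le> norm (m1 - \<mu>)" and mj: "norm (mj - \<mu>) \<le> \<tau> * R / (16 * M)"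
    and t: "\<bar>t\<bar> \<le> 1" and s: "norm s = 1"
  shows "- (norm (x - \<mu>))\<^sup>2 / (2 * \<tau>\<^sup>2) - (norm (x - m1))\<^sup>2 / (16 * v1)
      + (norm (x - mj))\<^sup>2 / (16 * vj) + t * inner (x - \<mu>) s / \<tau> \<le> - R\<^sup>2 / (64 * M\<^sup>2) - 3"
proof -
  have "max 0 (15/16 * R - norm (x - \<mu>)) \<le> norm (x - m1)"
    using m1 norm_triangle_ineq4[of "x - \<mu>" "x - m1"] by simp
  moreover have "norm (x - mj) \<le> norm (x - \<mu>) + norm (mj - \<mu>)"
    using norm_triangle_ineq4[of "x - \<mu>" "mj - \<mu>"] by simp
  moreover have "t * inner (x - \<mu>) s \<le> norm (x - \<mu>)"
  proof -
    have "t * inner (x - \<mu>) s \<le> \<bar>t\<bar> * \<bar>inner (x - \<mu>) s\<bar>"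
      by (metis abs_ge_self abs_mult)
    also have "\<dots> \<le> \<bar>inner (x - \<mu>) s\<bar>"
      using t by (intro mult_left_le_one_le) auto
    also have "\<dots> \<le> norm (x - \<mu>)"
      using Cauchy_Schwarz_ineq2[of "x - \<mu>" s] s by simp
    finally show ?thesis .
  qed
  ultimately show ?thesis
    using mj by (intro tilted_exponent_le_real[OF \<tau> R v, where c = "norm (mj - \<mu>)"]) auto
qed

lemma comp_term_ratio_powr:
  fixes Mu :: "nat \<Rightarrow> real ^ 'd"
  assumes "0 < P i" "0 < P j" "S i \<noteq> 0" "S j \<noteq> 0"
  shows "(comp_term P Mu S i x / comp_term P Mu S j x) powr e =
    (P i / P j) powr e * ((S j)\<^sup>2 / (S i)\<^sup>2) powr (real CARD('d) * e / 2) *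
    exp (e * ((norm (x - Mu j))\<^sup>2 / (2 * (S j)\<^sup>2) - (norm (x - Mu i))\<^sup>2 / (2 * (S i)\<^sup>2)))"
  using assms by (simp add: comp_term_def powr_def ln_mult ln_div flip: exp_add) (simp add: field_simps)

lemma gauss_tilt_normaliser_le:
  fixes \<tau> v1 vj :: real and n :: nat
  assumes \<tau>: "0 < \<tau>" and v1: "0 < v1"
    and r: "-1/2 \<le> \<tau>\<^sup>2 / vj - 1" "\<tau>\<^sup>2 / vj - 1 \<le> 1" "n * (\<tau>\<^sup>2 / vj - 1)\<^sup>2 \<le> 1"
  defines "A \<equiv> 1 / (2 * \<tau>\<^sup>2) + 1 / (16 * v1) - 1 / (16 * vj)"
  shows "(2 * pi * \<tau>\<^sup>2) powr (- n / 2) * (vj / v1) powr (n / 16) * sqrt (pi / A) ^ n \<le> exp (1/7)"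
proof -
  define v where "v = \<tau>\<^sup>2 / v1"
  define r where "r = \<tau>\<^sup>2 / vj"
  have r_bounds: "-1/2 \<le> r - 1" "r - 1 \<le> 1" "n * (r - 1)\<^sup>2 \<le> 1"
    using r unfolding r_def .
  then have "0 < r"
    by simp
  then have vj: "0 < vj"
    by (simp add: r_def zero_less_divide_iff)
  have "0 < v"
    using \<tau> v1 by (simp add: v_def)
  have A: "2 * \<tau>\<^sup>2 * A = 1 + v/8 - r/8"
    using \<tau> v1 vj by (simp add: A_def v_def r_def field_simps)
  have "0 < 2 * \<tau>\<^sup>2 * A"
    using \<open>0 < v\<close> r_bounds unfolding A by simp
  then have "0 < A"
    using \<tau> by (simp add: zero_less_mult_iff)
  have "(2 * pi * \<tau>\<^sup>2) powr (- n / 2) * (vj / v1) powr (n / 16) * sqrt (pi / A) ^ n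
      = exp (n * ((ln v - ln r) / 16 - ln (1 + v/8 - r/8) / 2))"
  proof -
    have "sqrt (pi / A) = exp (ln (pi / A) / 2)"
      using \<open>0 < A\<close> by (simp add: ln_sqrt flip: ln_sqrt)
    then have "sqrt (pi / A) ^ n = exp (n * (ln pi - ln A) / 2)"
      using \<open>0 < A\<close> by (simp add: ln_div flip: exp_of_nat_mult)
    then show ?thesis
      using \<tau> v1 vj \<open>0 < A\<close> unfolding A[symmetric]
      by (simp add: powr_def v_def r_def ln_mult ln_div flip: exp_add) (simp add: field_simps)
  qed
  also have "\<dots> \<le> exp (n * ((r - 1)\<^sup>2 / 7))"
    unfolding exp_le_cancel_iff
    using ln_tilt_normaliser_le[OF \<open>0 < v\<close> r_bounds(1,2)] by (intro mult_left_mono) auto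
  also have "\<dots> \<le> exp (1/7)"
    using r_bounds(3) by simp
  finally show ?thesis .
qed

lemma
  fixes x \<mu> m1 mj s :: "'a::euclidean_space"
  assumes \<tau>: "0 < \<tau>" "\<tau> \<le> M" and R: "2000 * M\<^sup>2 \<le> R\<^sup>2" "0 \<le> R"
    and v: "0 < v1" "v1 \<le> 3/2 * M\<^sup>2" "\<tau>\<^sup>2 / 2 \<le> vj"
    and m: "15/16 * R \<le> norm (m1 - \<mu>)" "norm (mj - \<mu>) \<le> \<tau> * R / (16 * M)"
    and t: "\<bar>t\<bar> \<le> 1" and s: "norm s = 1"
  defines "Q \<equiv> \<lambda>x. - (norm (x - \<mu>))\<^sup>2 / (2 * \<tau>\<^sup>2) - (norm (x - m1))\<^sup>2 / (16 * v1)
      + (norm (x - mj))\<^sup>2 / (16 * vj) + t * inner (x - \<mu>) s / \<tau>"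
    and "A \<equiv> 1 / (2 * \<tau>\<^sup>2) + 1 / (16 * v1) - 1 / (16 * vj)"
  shows integrable_exp_tilted_exponent: "integrable lborel (\<lambda>x. exp (Q x))"
    and integral_exp_tilted_exponent_le:
      "(\<integral>x. exp (Q x) \<partial>lborel) \<le> exp (- R\<^sup>2 / (64 * M\<^sup>2) - 3) * sqrt (pi / A) ^ DIM('a)"
proof -
  have "0 < \<tau>\<^sup>2 / 2"
    using \<tau> by simp
  then have "0 < vj"
    using v(3) by linarith
  have "1 / (16 * vj) \<le> 1 / (8 * \<tau>\<^sup>2)" "1 / (8 * \<tau>\<^sup>2) < 1 / (2 * \<tau>\<^sup>2)" "0 < 1 / (16 * v1)"
    using v \<tau> \<open>0 < vj\<close> by (auto intro!: divide_left_mono divide_strict_left_mono)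
  then have A_pos: "0 < A"
    unfolding A_def by linarith
  define B where "B = (1 / \<tau>\<^sup>2) *\<^sub>R \<mu> + (1 / (8 * v1)) *\<^sub>R m1 - (1 / (8 * vj)) *\<^sub>R mj + (t / \<tau>) *\<^sub>R s"
  define c where "c = - (norm \<mu>)\<^sup>2 / (2 * \<tau>\<^sup>2) - (norm m1)\<^sup>2 / (16 * v1) + (norm mj)\<^sup>2 / (16 * vj)
    - t * inner \<mu> s / \<tau>"
  have "Q x = - A * (norm x)\<^sup>2 + inner B x + c" for x
    unfolding Q_def A_def B_def c_def power2_norm_diff
    by (simp add: inner_commute algebra_simps add_divide_distrib diff_divide_distrib)
  moreover have "Q x \<le> - R\<^sup>2 / (64 * M\<^sup>2) - 3" for x
    unfolding Q_def using tilted_exponent_le[OF \<tau> R v m t s] .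
  ultimately show "integrable lborel (\<lambda>x. exp (Q x))"
    and "(\<integral>x. exp (Q x) \<partial>lborel) \<le> exp (- R\<^sup>2 / (64 * M\<^sup>2) - 3) * sqrt (pi / A) ^ DIM('a)"
    using integrable_exp_quadratic[OF A_pos] integral_exp_quadratic_le[OF A_pos] by blast+
qed

lemma
  fixes P :: "nat \<Rightarrow> real" and Mu :: "nat \<Rightarrow> real ^ 'd" and S :: "nat \<Rightarrow> real" and \<mu> s :: "real ^ 'd"
  assumes \<tau>: "0 < \<tau>" "\<tau> \<le> M" and R: "2000 * M\<^sup>2 \<le> R\<^sup>2" "0 \<le> R"
    and P: "0 < P i" "0 < P j"
    and Si: "0 < (S i)\<^sup>2" "(S i)\<^sup>2 \<le> 3/2 * M\<^sup>2"
    and Sj: "-1/2 \<le> \<tau>\<^sup>2 / (S j)\<^sup>2 - 1" "\<tau>\<^sup>2 / (S j)\<^sup>2 - 1 \<le> 1"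
      "real CARD('d) * (\<tau>\<^sup>2 / (S j)\<^sup>2 - 1)\<^sup>2 \<le> 1"
    and Mu: "15/16 * R \<le> norm (Mu i - \<mu>)" "norm (Mu j - \<mu>) \<le> \<tau> * R / (16 * M)"
    and t: "\<bar>t\<bar> \<le> 1" and s: "norm s = 1"
  defines "F \<equiv> \<lambda>x. gauss_density \<mu> \<tau> x * (comp_term P Mu S i x / comp_term P Mu S j x) powr (1/8)
    * exp (t * inner (x - \<mu>) s / \<tau>)"
  shows integrable_tilted_comp_ratio: "integrable lborel F"
    and integral_tilted_comp_ratio_le:
      "integral\<^sup>L lborel F \<le> (P i / P j) powr (1/8) * exp (- R\<^sup>2 / (64 * M\<^sup>2) - 2)"
proof -
  define d where "d = real CARD('d)"
  define v1 where "v1 = (S i)\<^sup>2"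
  define vj where "vj = (S j)\<^sup>2"
  have "0 < \<tau>\<^sup>2 / vj"
    using Sj by (simp add: vj_def)
  then have vj: "0 < vj" "\<tau>\<^sup>2 / 2 \<le> vj"
    using Sj \<tau> by (auto simp: vj_def zero_less_divide_iff field_simps)
  define Q where "Q = (\<lambda>x. - (norm (x - \<mu>))\<^sup>2 / (2 * \<tau>\<^sup>2) - (norm (x - Mu i))\<^sup>2 / (16 * v1)
      + (norm (x - Mu j))\<^sup>2 / (16 * vj) + t * inner (x - \<mu>) s / \<tau>)"
  define K where "K = (2 * pi * \<tau>\<^sup>2) powr (- d / 2) * (P i / P j) powr (1/8) * (vj / v1) powr (d / 16)"
  define A where "A = 1 / (2 * \<tau>\<^sup>2) + 1 / (16 * v1) - 1 / (16 * vj)"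
  have F_eq: "F = (\<lambda>x. K * exp (Q x))"
    using P Si vj
    by (simp add: fun_eq_iff F_def gauss_density_def comp_term_ratio_powr K_def Q_def d_def v1_def vj_def
        flip: exp_add)
  note exp_Q = integrable_exp_tilted_exponent[OF \<tau> R Si[folded v1_def] vj(2) Mu t s]
    integral_exp_tilted_exponent_le[OF \<tau> R Si[folded v1_def] vj(2) Mu t s]
  then show "integrable lborel F"
    unfolding F_eq Q_def by simp
  have "integral\<^sup>L lborel F \<le> K * (exp (- R\<^sup>2 / (64 * M\<^sup>2) - 3) * sqrt (pi / A) ^ CARD('d))"
    unfolding F_eq integral_mult_right_zero using exp_Q(2)
    by (intro mult_left_mono) (auto simp: K_def Q_def A_def)
  also have "\<dots> = (P i / P j) powr (1/8) * exp (- R\<^sup>2 / (64 * M\<^sup>2) - 3) *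
      ((2 * pi * \<tau>\<^sup>2) powr (- d / 2) * (vj / v1) powr (d / 16) * sqrt (pi / A) ^ CARD('d))"
    by (simp add: K_def)
  also have "\<dots> \<le> (P i / P j) powr (1/8) * exp (- R\<^sup>2 / (64 * M\<^sup>2) - 3) * exp (1/7)"
    using gauss_tilt_normaliser_le[OF \<tau>(1) _ Sj[folded vj_def], of v1] Si
    unfolding d_def A_def by (intro mult_left_mono) (auto simp: v1_def)
  also have "\<dots> \<le> (P i / P j) powr (1/8) * exp (- R\<^sup>2 / (64 * M\<^sup>2) - 2)"
    unfolding mult.assoc by (intro mult_left_mono) (auto simp flip: exp_add)
  finally show "integral\<^sup>L lborel F \<le> (P i / P j) powr (1/8) * exp (- R\<^sup>2 / (64 * M\<^sup>2) - 2)" .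
qed

lemma comp_term_pos: "0 < P l \<Longrightarrow> 0 < comp_term P Mu S l x"
  by (simp add: comp_term_def)

lemma estep_weight_nonneg:
  assumes "\<forall>l\<in>{1..k}. 0 < P l" "i \<in> {1..k}"
  shows "0 \<le> estep_weight k P Mu S i x"
  unfolding estep_weight_def using assms
  by (intro divide_nonneg_nonneg sum_nonneg less_imp_le[OF comp_term_pos]) auto

lemma estep_weight_le_ratio_powr:
  assumes P: "\<forall>l\<in>{1..k}. 0 < P l" and ij: "i \<in> {1..k}" "j \<in> {1..k}" "i \<noteq> j" and e: "0 \<le> e" "e \<le> 1"
  shows "estep_weight k P Mu S i x \<le> (comp_term P Mu S i x / comp_term P Mu S j x) powr e"
proof -
  let ?c = "\<lambda>l. comp_term P Mu S l x"
  have pos: "0 < ?c l" if "l \<in> {1..k}" for l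
    using P that by (simp add: comp_term_pos)
  have "?c i + ?c j = (\<Sum>l\<in>{i, j}. ?c l)"
    using ij by simp
  also have "\<dots> \<le> (\<Sum>l = 1..k. ?c l)"
    using ij pos by (intro sum_mono2) (auto intro: less_imp_le)
  finally have "estep_weight k P Mu S i x \<le> ?c i / (?c i + ?c j)"
    unfolding estep_weight_def using pos[of i] pos[of j] ij by (intro frac_le) auto
  also have "\<dots> \<le> (?c i / ?c j) powr e"
    using pos ij e by (intro divide_add_le_powr) auto
  finally show ?thesis .
qed

lemma abs_gauss_expect_le:
  assumes h: "integrable lborel h" and le: "\<And>x. \<bar>gauss_density \<mu> \<sigma> x * f x\<bar> \<le> h x"
  shows "\<bar>gauss_expect \<mu> \<sigma> f\<bar> \<le> integral\<^sup>L lborel h"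
proof (cases "integrable lborel (\<lambda>x. gauss_density \<mu> \<sigma> x * f x)")
  case True
  then show ?thesis
    unfolding gauss_expect_def using h le by (intro integral_abs_bound_integral) auto
next
  case False
  have "0 \<le> integral\<^sup>L lborel h"
    using le by (intro integral_nonneg_AE) (auto intro: order_trans[OF abs_ge_zero])
  then show ?thesis
    using False by (simp add: gauss_expect_def not_integrable_integral_eq)
qed

lemma abs_mult_le_tilt:
  fixes d f h y \<tau> :: real
  assumes d: "0 \<le> d" and f: "\<bar>f\<bar> \<le> h" and \<tau>: "0 < \<tau>"
  shows "\<bar>d * f\<bar> \<le> d * h * (exp (y / \<tau>) + exp (- (y / \<tau>)))"
    and "\<bar>d * (f * y)\<bar> \<le> \<tau> * (d * h * (exp (y / \<tau>) + exp (- (y / \<tau>))))"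
proof -
  have "\<bar>d * f\<bar> \<le> d * h"
    using d f by (simp add: abs_mult mult_left_mono)
  also have "\<dots> \<le> d * h * (exp (y / \<tau>) + exp (- (y / \<tau>)))"
  proof -
    have "0 \<le> d * h"
      using d f abs_ge_zero[of f] by (meson mult_nonneg_nonneg order_trans)
    then show ?thesis
      using one_le_exp_add_exp_minus[of "y / \<tau>"] by (simp add: mult_le_cancel_left1)
  qed
  finally show "\<bar>d * f\<bar> \<le> d * h * (exp (y / \<tau>) + exp (- (y / \<tau>)))" .
  have "\<bar>y\<bar> \<le> \<tau> * (exp (y / \<tau>) + exp (- (y / \<tau>)))"
    using abs_le_exp_add_exp_minus[of "y / \<tau>"] \<tau> by (simp add: abs_div field_simps)
  then have "\<bar>d * (f * y)\<bar> \<le> d * h * (\<tau> * (exp (y / \<tau>) + exp (- (y / \<tau>))))"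
    unfolding abs_mult mult.assoc using d f by (intro mult_left_mono mult_mono) auto
  then show "\<bar>d * (f * y)\<bar> \<le> \<tau> * (d * h * (exp (y / \<tau>) + exp (- (y / \<tau>))))"
    by (simp add: mult_ac)
qed

lemma abs_gauss_expect_weight_diff_le:
  fixes w w' g g' :: "real ^ 'd \<Rightarrow> real" and \<mu> s :: "real ^ 'd"
  assumes \<tau>: "0 < \<tau>"
    and w: "\<And>x. 0 \<le> w x" "\<And>x. w x \<le> g x" and w': "\<And>x. 0 \<le> w' x" "\<And>x. w' x \<le> g' x"
  defines "G \<equiv> \<lambda>g t x. gauss_density \<mu> \<tau> x * g x * exp (t * inner (x - \<mu>) s / \<tau>)"
  assumes g: "\<And>t. t \<in> {-1, 1} \<Longrightarrow> integrable lborel (G g t) \<and> integral\<^sup>L lborel (G g t) \<le> a"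
    and g': "\<And>t. t \<in> {-1, 1} \<Longrightarrow> integrable lborel (G g' t) \<and> integral\<^sup>L lborel (G g' t) \<le> a'"
  shows "\<bar>gauss_expect \<mu> \<tau> (\<lambda>x. w x - w' x)\<bar> \<le> 2 * (a + a')"
    and "\<bar>gauss_expect \<mu> \<tau> (\<lambda>x. (w x - w' x) * inner (x - \<mu>) s)\<bar> \<le> \<tau> * (2 * (a + a'))"
proof -
  define H where "H = (\<lambda>x. G g 1 x + G g (-1) x + (G g' 1 x + G g' (-1) x))"
  have H_int: "integrable lborel H"
    using g g' by (simp add: H_def)
  have H_le: "integral\<^sup>L lborel H \<le> 2 * (a + a')"
    using g[of 1] g[of "-1"] g'[of 1] g'[of "-1"] by (simp add: H_def)
  have H_eq: "H x = gauss_density \<mu> \<tau> x * (g x + g' x) *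
      (exp (inner (x - \<mu>) s / \<tau>) + exp (- (inner (x - \<mu>) s / \<tau>)))" for x
    by (simp add: H_def G_def algebra_simps del: inner_diff_left)
  have dens: "0 \<le> gauss_density \<mu> \<tau> x" for x
    by (simp add: gauss_density_def)
  have diff: "\<bar>w x - w' x\<bar> \<le> g x + g' x" for x
    using w[of x] w'[of x] by linarith
  have tilt: "\<bar>gauss_density \<mu> \<tau> x * (w x - w' x)\<bar> \<le> H x"
    "\<bar>gauss_density \<mu> \<tau> x * ((w x - w' x) * inner (x - \<mu>) s)\<bar> \<le> \<tau> * H x" for x
    unfolding H_eq using abs_mult_le_tilt[OF dens[of x] diff[of x] \<tau>] by blast+
  show "\<bar>gauss_expect \<mu> \<tau> (\<lambda>x. w x - w' x)\<bar> \<le> 2 * (a + a')"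
    using abs_gauss_expect_le[OF H_int tilt(1)] H_le by linarith
  from tilt(2) have "\<bar>gauss_expect \<mu> \<tau> (\<lambda>x. (w x - w' x) * inner (x - \<mu>) s)\<bar> \<le> \<tau> * integral\<^sup>L lborel H"
    using abs_gauss_expect_le[of "\<lambda>x. \<tau> * H x"] H_int by simp
  also have "\<dots> \<le> \<tau> * (2 * (a + a'))"
    using H_le \<tau> by (simp add: mult_left_mono)
  finally show "\<bar>gauss_expect \<mu> \<tau> (\<lambda>x. (w x - w' x) * inner (x - \<mu>) s)\<bar> \<le> \<tau> * (2 * (a + a'))" .
qed

lemma Max_div_Min_ge_one:
  fixes A :: "real set"
  assumes "finite A" "A \<noteq> {}" "\<forall>x\<in>A. 0 < x"
  shows "1 \<le> Max A / Min A"
proof -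
  obtain a where "a \<in> A"
    using assms(2) by blast
  then have "Min A \<le> Max A"
    using assms(1) Min_le[of A a] Max_ge[of A a] by linarith
  moreover have "0 < Min A"
    using assms Min_in[OF assms(1,2)] by blast
  ultimately show ?thesis
    by simp
qed

lemma separation_log_ge:
  fixes sigs pis :: "nat \<Rightarrow> real"
  assumes "2 \<le> k" "\<forall>i\<in>{1..k}. 0 < sigs i" "\<forall>i\<in>{1..k}. 0 < pis i"
  shows "2/3 \<le> ln (real k) + ln ((Max (sigs ` {1..k}) / Min (sigs ` {1..k})) *
    (Max (pis ` {1..k}) / Min (pis ` {1..k})))"
proof -
  have ln_mult_nonneg: "0 \<le> ln (a * b)" if "1 \<le> a" "1 \<le> b" for a b :: real
    using mult_mono[OF that] that by (intro ln_ge_zero) simp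
  have "ln 2 \<le> ln (real k)"
    using assms(1) by simp
  then have "2/3 \<le> ln (real k)"
    using ln2_ge_two_thirds by linarith
  moreover have "0 \<le> ln ((Max (sigs ` {1..k}) / Min (sigs ` {1..k})) * (Max (pis ` {1..k}) / Min (pis ` {1..k})))"
    using assms by (intro ln_mult_nonneg Max_div_Min_ge_one) auto
  ultimately show ?thesis
    by linarith
qed

lemma separation_sq_ge:
  fixes C M L R :: real
  assumes "64 \<le> C" "0 \<le> M" "2/3 \<le> L" "C * M * sqrt L \<le> R"
  shows "2000 * M\<^sup>2 \<le> R\<^sup>2" and "M \<le> R"
proof -
  have "64 * M * sqrt L \<le> R"
    using assms mult_right_mono[of 64 C "M * sqrt L"] by (simp add: mult.assoc)
  then have "(64 * M * sqrt L)\<^sup>2 \<le> R\<^sup>2" and "0 \<le> R"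
    using assms by (auto intro: power_mono order_trans[rotated])
  moreover have "(64 * M * sqrt L)\<^sup>2 = 4096 * L * M\<^sup>2"
    using assms by (simp add: power_mult_distrib)
  moreover have "2000 * M\<^sup>2 \<le> 4096 * L * M\<^sup>2"
    using assms by (intro mult_right_mono) auto
  ultimately show "2000 * M\<^sup>2 \<le> R\<^sup>2"
    by linarith
  then have "M\<^sup>2 \<le> R\<^sup>2"
    using zero_le_power2[of M] by linarith
  then show "M \<le> R"
    using \<open>0 \<le> R\<close> assms(2) by (simp add: power2_le_iff_abs_le)
qed

lemma mean_close_pair:
  fixes mus m :: "nat \<Rightarrow> 'a::real_normed_vector"
  assumes close: "norm (m i - mus i) \<le>
      sigs i / 16 * Min ((\<lambda>l. norm (mus i - mus l) / max (sigs i) (sigs l)) ` {l\<in>{1..k}. l \<noteq> i})"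
    and l: "l \<in> {1..k}" "l \<noteq> i" and "0 \<le> sigs i"
  shows "norm (m i - mus i) \<le> sigs i * norm (mus i - mus l) / (16 * max (sigs i) (sigs l))"
proof -
  have "Min ((\<lambda>l. norm (mus i - mus l) / max (sigs i) (sigs l)) ` {l\<in>{1..k}. l \<noteq> i})
      \<le> norm (mus i - mus l) / max (sigs i) (sigs l)"
    using l by (intro Min_le) auto
  then show ?thesis
    using close mult_left_mono[of _ _ "sigs i / 16"] \<open>0 \<le> sigs i\<close> by fastforce
qed

lemma mean_close_far:
  fixes mus m :: "nat \<Rightarrow> 'a::real_normed_vector"
  assumes close: "norm (m i - mus i) \<le>
      sigs i / 16 * Min ((\<lambda>l. norm (mus i - mus l) / max (sigs i) (sigs l)) ` {l\<in>{1..k}. l \<noteq> i})"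
    and l: "l \<in> {1..k}" "l \<noteq> i" and "0 < sigs i"
  shows "15/16 * norm (mus i - mus l) \<le> norm (m i - mus l)"
proof -
  have "norm (m i - mus i) \<le> sigs i * norm (mus i - mus l) / (16 * max (sigs i) (sigs l))"
    using mean_close_pair[where m = m and mus = mus and sigs = sigs, OF close l] \<open>0 < sigs i\<close> by simp
  also have "\<dots> \<le> norm (mus i - mus l) / 16"
    using \<open>0 < sigs i\<close> by (simp add: field_simps mult_right_mono)
  finally show ?thesis
    using norm_triangle_ineq4[of "m i - mus i" "m i - mus l"] by (simp add: norm_minus_commute)
qed

lemma variance_close_bounds:
  fixes v \<sigma> :: real and n :: nat
  assumes \<sigma>: "0 < \<sigma>" and n: "0 < n" and close: "\<bar>v - \<sigma>\<^sup>2\<bar> \<le> 0.5 * \<sigma>\<^sup>2 / sqrt n"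
  shows "0 < v" "v \<le> 3/2 * \<sigma>\<^sup>2" "-1/2 \<le> \<sigma>\<^sup>2 / v - 1" "\<sigma>\<^sup>2 / v - 1 \<le> 1"
    and "n * (\<sigma>\<^sup>2 / v - 1)\<^sup>2 \<le> 1"
proof -
  have "0.5 * \<sigma>\<^sup>2 / sqrt n \<le> 0.5 * \<sigma>\<^sup>2"
    using n \<sigma> by (simp add: divide_le_eq)
  then have v: "\<sigma>\<^sup>2 / 2 \<le> v" "v \<le> 3/2 * \<sigma>\<^sup>2"
    using close by (auto simp: abs_le_iff)
  moreover have "0 < \<sigma>\<^sup>2 / 2"
    using \<sigma> by simp
  ultimately show "0 < v" "v \<le> 3/2 * \<sigma>\<^sup>2"
    by linarith+
  show "-1/2 \<le> \<sigma>\<^sup>2 / v - 1" "\<sigma>\<^sup>2 / v - 1 \<le> 1"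
    using v \<open>0 < v\<close> by (simp_all add: field_simps)
  have "(\<sigma>\<^sup>2 / v - 1)\<^sup>2 = (v - \<sigma>\<^sup>2)\<^sup>2 / v\<^sup>2"
    using \<open>0 < v\<close> by (simp add: field_simps power2_eq_square)
  also have "\<dots> \<le> (0.5 * \<sigma>\<^sup>2 / sqrt n)\<^sup>2 / (\<sigma>\<^sup>2 / 2)\<^sup>2"
  proof (rule frac_le)
    show "(v - \<sigma>\<^sup>2)\<^sup>2 \<le> (0.5 * \<sigma>\<^sup>2 / sqrt n)\<^sup>2"
      using close by (simp add: power2_le_iff_abs_le)
    show "(\<sigma>\<^sup>2 / 2)\<^sup>2 \<le> v\<^sup>2"
      using v \<sigma> by (intro power_mono) auto
  qed (use \<sigma> in auto)
  also have "\<dots> = 1 / n"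
    using \<sigma> n by (simp add: power_divide power_mult_distrib)
  finally show "n * (\<sigma>\<^sup>2 / v - 1)\<^sup>2 \<le> 1"
    using n by (simp add: field_simps)
qed

lemma abs_gauss_expect_estep_weight_diff_le_powr:
  fixes p pis :: "nat \<Rightarrow> real" and m mus :: "nat \<Rightarrow> real ^ 'd" and sg sigs :: "nat \<Rightarrow> real"
    and s :: "real ^ 'd"
  assumes pos: "\<forall>i\<in>{1..k}. 0 < p i" "\<forall>i\<in>{1..k}. 0 < pis i" and j: "j \<in> {1..k}" "j \<noteq> 1"
    and M: "0 < sigs 1" "0 < sigs j" "sigs 1 \<le> M" "sigs j \<le> M"
    and R: "2000 * M\<^sup>2 \<le> R\<^sup>2" "R = norm (mus j - mus 1)"
    and sg: "0 < (sg 1)\<^sup>2" "(sg 1)\<^sup>2 \<le> 3/2 * (sigs 1)\<^sup>2"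
      "-1/2 \<le> (sigs j)\<^sup>2 / (sg j)\<^sup>2 - 1" "(sigs j)\<^sup>2 / (sg j)\<^sup>2 - 1 \<le> 1"
      "real CARD('d) * ((sigs j)\<^sup>2 / (sg j)\<^sup>2 - 1)\<^sup>2 \<le> 1"
    and m: "15/16 * R \<le> norm (m 1 - mus j)" "norm (m j - mus j) \<le> sigs j * R / (16 * M)"
    and s: "norm s = 1"
  defines "a \<equiv> (p 1 / p j) powr (1/8) * exp (- R\<^sup>2 / (64 * M\<^sup>2) - 2)
      + (pis 1 / pis j) powr (1/8) * exp (- R\<^sup>2 / (64 * M\<^sup>2) - 2)"
    and "\<Delta> \<equiv> \<lambda>x. estep_weight k p m sg 1 x - estep_weight k pis mus sigs 1 x"
  shows "\<bar>gauss_expect (mus j) (sigs j) \<Delta>\<bar> \<le> 2 * a"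
    and "\<bar>gauss_expect (mus j) (sigs j) (\<lambda>x. \<Delta> x * inner (x - mus j) s)\<bar> \<le> sigs j * (2 * a)"
proof -
  have one: "1 \<in> {1..k}"
    using j by auto
  have p_pos: "0 < p 1" "0 < p j" and pis_pos: "0 < pis 1" "0 < pis j"
    using pos one j by auto
  have R0: "0 \<le> R"
    using R(2) by simp
  have "(sigs 1)\<^sup>2 \<le> M\<^sup>2"
    using M by (intro power_mono) auto
  then have sigs1_M: "(sigs 1)\<^sup>2 \<le> 3/2 * M\<^sup>2"
    using zero_le_power2[of M] by linarith
  have sg_M: "(sg 1)\<^sup>2 \<le> 3/2 * M\<^sup>2"
    using sg(2) \<open>(sigs 1)\<^sup>2 \<le> M\<^sup>2\<close> by linarith
  have w: "0 \<le> estep_weight k P Mu S 1 x"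
    "estep_weight k P Mu S 1 x \<le> (comp_term P Mu S 1 x / comp_term P Mu S j x) powr (1/8)"
    if "\<forall>i\<in>{1..k}. 0 < P i" for P and Mu :: "nat \<Rightarrow> real ^ 'd" and S x
    using estep_weight_nonneg[OF that one] estep_weight_le_ratio_powr[OF that one j(1) j(2)[symmetric], where e = "1/8"]
    by auto
  define G where "G = (\<lambda>P Mu S t x. gauss_density (mus j) (sigs j) x *
    (comp_term P Mu S 1 x / comp_term P Mu S j x) powr (1/8) * exp (t * inner (x - mus j) s / sigs j))"
  note tilted = integrable_tilted_comp_ratio integral_tilted_comp_ratio_le
  have estimates: "integrable lborel (G p m sg t) \<and>
      integral\<^sup>L lborel (G p m sg t) \<le> (p 1 / p j) powr (1/8) * exp (- R\<^sup>2 / (64 * M\<^sup>2) - 2)"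
    if "t \<in> {-1, 1}" for t
    using tilted[OF M(2,4) R(1) R0 p_pos sg(1) sg_M sg(3-5) m, of t, OF _ s] that
    unfolding G_def by auto
  have truth_sigs: "0 < (sigs 1)\<^sup>2" "(sigs 1)\<^sup>2 \<le> 3/2 * M\<^sup>2" "-1/2 \<le> (sigs j)\<^sup>2 / (sigs j)\<^sup>2 - 1"
      "(sigs j)\<^sup>2 / (sigs j)\<^sup>2 - 1 \<le> 1" "real CARD('d) * ((sigs j)\<^sup>2 / (sigs j)\<^sup>2 - 1)\<^sup>2 \<le> 1"
    using M sigs1_M by auto
  have truth_mus: "15/16 * R \<le> norm (mus 1 - mus j)" "norm (mus j - mus j) \<le> sigs j * R / (16 * M)"
    using R(2) R0 M by (auto simp: norm_minus_commute)
  have truth: "integrable lborel (G pis mus sigs t) \<and>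
      integral\<^sup>L lborel (G pis mus sigs t) \<le> (pis 1 / pis j) powr (1/8) * exp (- R\<^sup>2 / (64 * M\<^sup>2) - 2)"
    if "t \<in> {-1, 1}" for t
    using tilted[OF M(2,4) R(1) R0 pis_pos truth_sigs truth_mus, of t, OF _ s] that
    unfolding G_def by auto
  note weight_diff = abs_gauss_expect_weight_diff_le[where s = s, OF M(2) w[OF pos(1)] w[OF pos(2)]]
  show "\<bar>gauss_expect (mus j) (sigs j) \<Delta>\<bar> \<le> 2 * a"
    unfolding \<Delta>_def a_def by (rule weight_diff(1)) (use estimates truth in \<open>simp_all add: G_def\<close>)
  show "\<bar>gauss_expect (mus j) (sigs j) (\<lambda>x. \<Delta> x * inner (x - mus j) s)\<bar> \<le> sigs j * (2 * a)"
    unfolding \<Delta>_def a_def by (rule weight_diff(2)) (use estimates truth in \<open>simp_all add: G_def\<close>)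
qed

lemma prior_ratio_constants_le:
  fixes p1 pj q1 qj \<tau> R \<beta> :: real
  assumes p: "0 < p1" "0 < pj" "p1 \<le> 3/2 * q1" "qj / 2 \<le> pj" and q: "0 < q1" "0 < qj"
    and \<tau>: "0 < \<tau>" "\<tau> \<le> R"
  defines "a \<equiv> (p1 / pj) powr (1/8) * exp (- \<beta> - 2) + (q1 / qj) powr (1/8) * exp (- \<beta> - 2)"
  shows "2 * a \<le> (3 * (q1 / qj) + 5) * exp (- \<beta>)"
    and "\<tau> * (2 * a) \<le> (3 * (q1 / qj) * \<tau> + 5 * R) * exp (- \<beta>)"
proof -
  define X where "X = q1 / qj"
  have "0 \<le> X"
    using q by (simp add: X_def)
  have "p1 / pj \<le> (3/2 * q1) / (qj / 2)"
    using p q by (intro frac_le) auto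
  then have "(p1 / pj) powr (1/8) \<le> 1 + 3 * X"
    using powr_le_one_add[of "p1 / pj" "1/8"] p by (simp add: X_def)
  moreover have "(q1 / qj) powr (1/8) \<le> 1 + X"
    using powr_le_one_add[of "q1 / qj" "1/8"] q by (simp add: X_def)
  ultimately have "2 * a \<le> 2 * ((1 + 3 * X) * exp (- \<beta> - 2) + (1 + X) * exp (- \<beta> - 2))"
    unfolding a_def by (intro mult_left_mono add_mono mult_right_mono) auto
  also have "\<dots> = (4 + 8 * X) * exp (- \<beta> - 2)"
    by (simp add: algebra_simps)
  also have "\<dots> \<le> (4 + 8 * X) * (exp (- \<beta>) / 3)"
  proof -
    have "3 * exp (- \<beta> - 2) \<le> exp 2 * exp (- \<beta> - 2)"
      using exp_ge_add_one_self[of 2] by (intro mult_right_mono) auto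
    then show ?thesis
      using \<open>0 \<le> X\<close> by (intro mult_left_mono) (auto simp flip: exp_add)
  qed
  finally have a_le: "2 * a \<le> (4 + 8 * X) / 3 * exp (- \<beta>)"
    by simp
  also have "\<dots> \<le> (3 * X + 5) * exp (- \<beta>)"
    using \<open>0 \<le> X\<close> by (intro mult_right_mono) auto
  finally show "2 * a \<le> (3 * (q1 / qj) + 5) * exp (- \<beta>)"
    by (simp add: X_def)
  have "\<tau> * (2 * a) \<le> \<tau> * (4 + 8 * X) / 3 * exp (- \<beta>)"
    using mult_left_mono[OF a_le, of \<tau>] \<tau> by simp
  also have "\<dots> \<le> (3 * X * \<tau> + 5 * R) * exp (- \<beta>)"
  proof (rule mult_right_mono)
    have "0 \<le> X * \<tau>"
      using \<open>0 \<le> X\<close> \<tau> by simp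
    then show "\<tau> * (4 + 8 * X) / 3 \<le> 3 * X * \<tau> + 5 * R"
      using \<tau> by (simp add: algebra_simps)
  qed simp
  finally show "\<tau> * (2 * a) \<le> (3 * (q1 / qj) * \<tau> + 5 * R) * exp (- \<beta>)"
    by (simp add: X_def)
qed

theorem corollary3p1:
  fixes k :: nat and C :: real
    and pis :: "nat \<Rightarrow> real" and mus :: "nat \<Rightarrow> real ^ 'd" and sigs :: "nat \<Rightarrow> real"
    and p :: "nat \<Rightarrow> real" and m :: "nat \<Rightarrow> real ^ 'd" and sg :: "nat \<Rightarrow> real"
    and j :: nat and s :: "real ^ 'd"
  assumes C: "C \<ge> 64"
    and pis_pos: "\<forall>i\<in>{1..k}. pis i > 0"
    and pis_sum: "(\<Sum>i = 1..k. pis i) = 1"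
    and sigs_pos: "\<forall>i\<in>{1..k}. sigs i > 0"
    and sep: "\<forall>i\<in>{1..k}. \<forall>l\<in>{1..k}. i \<noteq> l \<longrightarrow>
        norm (mus i - mus l) \<ge> C * max (sigs i) (sigs l) *
          sqrt (ln (real k) + ln ((Max (sigs ` {1..k}) / Min (sigs ` {1..k})) *
                                  (Max (pis ` {1..k}) / Min (pis ` {1..k}))))"
    and mu_close: "\<forall>i\<in>{1..k}. norm (m i - mus i) \<le>
        sigs i / 16 * Min ((\<lambda>l. norm (mus i - mus l) / max (sigs i) (sigs l)) ` {l\<in>{1..k}. l \<noteq> i})"
    and pi_close: "\<forall>i\<in>{1..k}. \<bar>p i - pis i\<bar> \<le> pis i / 2"
    and sig_close: "\<forall>i\<in>{1..k}. \<bar>(sg i)\<^sup>2 - (sigs i)\<^sup>2\<bar> \<le> 0.5 * (sigs i)\<^sup>2 / sqrt (real CARD('d))"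
    and j: "j \<in> {1..k}" "j \<noteq> 1"
    and s: "norm s = 1"
  defines "R \<equiv> norm (mus j - mus 1)"
    and "\<beta> \<equiv> (norm (mus j - mus 1))\<^sup>2 / (64 * (max (sigs 1) (sigs j))\<^sup>2)"
    and "\<Delta> \<equiv> (\<lambda>x. estep_weight k p m sg 1 x - estep_weight k pis mus sigs 1 x)"
  shows "gauss_expect (mus j) (sigs j) \<Delta> \<le> (3 * (pis 1 / pis j) + 5) * exp (- \<beta>) \<and>
         \<bar>gauss_expect (mus j) (sigs j) (\<lambda>x. \<Delta> x * inner (x - mus j) s)\<bar>
           \<le> (3 * (pis 1 / pis j) * sigs j + 5 * R) * exp (- \<beta>)"
proof -
  define M where "M = max (sigs 1) (sigs j)"
  have one: "1 \<in> {1..k}" and k: "2 \<le> k"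
    using j by auto
  have \<sigma>: "0 < sigs 1" "0 < sigs j"
    using sigs_pos one j by auto
  have p: "pis i / 2 \<le> p i" "p i \<le> 3/2 * pis i" if "i \<in> {1..k}" for i
    using pi_close[rule_format, OF that] by arith+
  have p_pos: "\<forall>i\<in>{1..k}. 0 < p i"
    using p(1) pis_pos by (meson half_gt_zero order_less_le_trans)
  have M: "sigs 1 \<le> M" "sigs j \<le> M"
    by (simp_all add: M_def)
  have R2: "2000 * M\<^sup>2 \<le> R\<^sup>2" "M \<le> R"
    using separation_sq_ge[OF C _ separation_log_ge[OF k sigs_pos pis_pos] sep[rule_format, OF j(1) one j(2)]] \<sigma>
    by (simp_all add: R_def M_def max.commute)
  have m1: "15/16 * R \<le> norm (m 1 - mus j)"
    using mean_close_far[where m = m and mus = mus and sigs = sigs, OF mu_close[rule_format, OF one] j \<sigma>(1)]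
    by (simp add: R_def norm_minus_commute)
  have mj: "norm (m j - mus j) \<le> sigs j * R / (16 * M)"
    using mean_close_pair[where m = m and mus = mus and sigs = sigs, OF mu_close[rule_format, OF j(1)] one j(2)[symmetric]] \<sigma>
    by (simp add: R_def M_def max.commute)
  note sg1 = variance_close_bounds[OF \<sigma>(1) zero_less_card_finite sig_close[rule_format, OF one]]
  note sgj = variance_close_bounds[OF \<sigma>(2) zero_less_card_finite sig_close[rule_format, OF j(1)]]
  note bounds = abs_gauss_expect_estep_weight_diff_le_powr[OF p_pos pis_pos j \<sigma> M R2(1) R_def[THEN meta_eq_to_obj_eq]
      sg1(1,2) sgj(3-5) m1 mj s]
  note constants = prior_ratio_constants_le[OF _ _ p(2)[OF one] p(1)[OF j(1)] _ _ \<sigma>(2) order_trans[OF M(2) R2(2)]]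
  show ?thesis
    using bounds constants p_pos pis_pos one j unfolding \<Delta>_def \<beta>_def R_def M_def
    by (auto dest: abs_le_D1 intro: order_trans)
qed

end
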